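(* The set $\{A(\mathbf j,r)\mid A\in\Xi^\pm(\infty),\ \mathbf j\in\mathbb N^\infty,\ \sigma(\mathbf j)+\sigma(A)\le r\}$ is a $\mathbb Q(v)$-basis of $\mathbf V(\infty,r)$.
   Context: $v$ indeterminate, $\mathcal Z=\mathbb Z[v,v^{-1}]$. Matrices are $\mathbb Z\times\mathbb Z$ of finite support; $\Xi(\infty,r)$: nonnegative integer matrices with entry sum $r$; $\Xi^\pm(\infty)$: nonnegative integer matrices with zero diagonal; $\sigma(A)$ the entry sum; $ro(A)$, $co(A)$ the row/column sum sequences. $\mathbb Z^\infty$, $\mathbb N^\infty$: finitely supported integer / nonnegative integer sequences indexed by $\mathbb Z$; $\sigma(\mathbf j)=\sum_ij_i$. $\mathcal K(\infty,r)$: for a finite field with $q$ elements and an $r$-dimensional space $V$, a $\mathbb Z$-step flag is $(V_i)_{i\in\mathbb Z}$, $V_i\subseteq V_{i+1}$, $V_i=0$ for $i\ll0$, $\bigcup V_i=V$; $GL(V)$-orbits $\mathcal O_A$ on pairs of flags correspond to $A\in\Xi(\infty,r)$ via $a_{ij}=\dim(V_{i-1}+V_i\cap V'_j)-\dim(V_{i-1}+V_i\cap V'_{j-1})$; for $(f_1,f_2)\in\mathcal O_C$ the number of $f$ with $(f_1,f)\in\mathcal O_A$, $(f,f_2)\in\mathcal O_B$ is $g_{A,B,C}|_{v^2=q}$ for some $g_{A,B,C}\in\mathbb Z[v^2]$. $\mathcal K(\infty,r)$ is the free $\mathcal Z$-module on $\{e_A\}_{A\in\Xi(\infty,r)}$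 with $e_Ae_B=\sum_Cg_{A,B,C}e_C$; $[A]=v^{-d_A}e_A$, $d_A=\sum_{i\ge k,j<l}a_{ij}a_{kl}$. $\widehat{\boldsymbol{\mathcal K}}(\infty,r)$ is the $\mathbb Q(v)$-algebra of formal sums $\sum_A\beta_A[A]$ such that for each $\lambda$ only finitely many $A$ with $\beta_A\ne0$ have $ro(A)=\lambda$ and only finitely many have $co(A)=\lambda$, with product extended bilinearly. For $A\in\Xi^\pm(\infty)$ and $\mathbf j\in\mathbb Z^\infty$, $A(\mathbf j,r)=\sum_{\lambda\in\mathbb N^\infty,\sigma(A)+\sigma(\lambda)=r}v^{\sum_i\lambda_ij_i}[A+\operatorname{diag}(\lambda)]$. $\mathbf V(\infty,r)$ is the $\mathbb Q(v)$-span of all $A(\mathbf j,r)$ with $A\in\Xi^\pm(\infty)$, $\mathbf j\in\mathbb Z^\infty$. *)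

theory Defs
  imports Main "HOL-Library.Function_Algebras" "HOL-Computational_Algebra.Polynomial"
    "HOL-Computational_Algebra.Fraction_Field"
begin

type_synonym Qv = "rat poly fract"

definition vv :: Qv where "vv = Fract [:0, 1:] 1"

type_synonym zmat = "int \<Rightarrow> int \<Rightarrow> nat"

definition fin_supp_seq :: "(int \<Rightarrow> 'a::zero) \<Rightarrow> bool" where
  "fin_supp_seq f \<longleftrightarrow> finite {i. f i \<noteq> 0}"

definition fin_supp_mat :: "zmat \<Rightarrow> bool" where
  "fin_supp_mat A \<longleftrightarrow> finite {(i, k). A i k \<noteq> 0}"

definition sigma_seq :: "(int \<Rightarrow> 'a::comm_monoid_add) \<Rightarrow> 'a" where
  "sigma_seq f = (\<Sum>i\<in>{i. f i \<noteq> 0}. f i)"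

definition sigma_mat :: "zmat \<Rightarrow> nat" where
  "sigma_mat A = (\<Sum>(i, k)\<in>{(i, k). A i k \<noteq> 0}. A i k)"

definition Xi_pm :: "zmat set" where
  "Xi_pm = {A. fin_supp_mat A \<and> (\<forall>i. A i i = 0)}"

definition N_inf :: "(int \<Rightarrow> nat) set" where
  "N_inf = {l. fin_supp_seq l}"

definition Z_inf :: "(int \<Rightarrow> int) set" where
  "Z_inf = {j. fin_supp_seq j}"

definition diagm :: "(int \<Rightarrow> nat) \<Rightarrow> zmat" where
  "diagm l = (\<lambda>i k. if i = k then l i else 0)"

text \<open>Formal sums sum_A beta_A [A] in the completion K^(infinity,r) are represented by
  their coefficient functions A |-> beta_A (relative to the basis {[A]}).
  The vector space structure is pointwise.\<close>
type_synonym formal_sum = "zmat \<Rightarrow> Qv"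

definition fscale :: "Qv \<Rightarrow> formal_sum \<Rightarrow> formal_sum" where
  "fscale c f = (\<lambda>M. c * f M)"

text \<open>A(j,r) = sum over lambda in N^infinity with sigma(A)+sigma(lambda)=r of
  v^(sum_i lambda_i j_i) [A + diag(lambda)]; its coefficient at [M] is the sum
  of the coefficients of all terms with A + diag(lambda) = M.\<close>
definition Ajr :: "zmat \<Rightarrow> (int \<Rightarrow> int) \<Rightarrow> nat \<Rightarrow> formal_sum" where
  "Ajr A j r = (\<lambda>M. \<Sum>l\<in>{l. l \<in> N_inf \<and> sigma_mat A + sigma_seq l = r
        \<and> M = (\<lambda>i k. A i k + diagm l i k)}.
      vv powi (\<Sum>i\<in>{i. l i \<noteq> 0}. int (l i) * j i))"

definition Vr :: "nat \<Rightarrow> formal_sum set" where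
  "Vr r = module.span fscale {Ajr A j r | A j. A \<in> Xi_pm \<and> j \<in> Z_inf}"

end

theory Submission
  imports Defs
begin

text \<open>Fix \<open>A\<close> and put \<open>t = r - \<sigma>(A)\<close>. Then \<open>A(j,r)\<close> is the diagonal series whose coefficient
  at \<open>[A + diag \<lambda>]\<close>, for \<open>\<sigma>(\<lambda>) = t\<close>, is \<open>\<Prod>\<^sub>i (v^j\<^sub>i)^\<lambda>\<^sub>i\<close>; so everything is about functions of
  \<open>\<lambda>\<close> on that level set, where all \<open>\<lambda>\<^sub>i \<le> t\<close>. Newton interpolation at the nodes \<open>1, v, v^2, \<dots>\<close>
  writes \<open>(v^j\<^sub>i)^\<lambda>\<^sub>i\<close> as a combination of \<open>P\<^sub>b(v^\<lambda>\<^sub>i)\<close>, \<open>b \<le> t\<close>, where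
  \<open>P\<^sub>b(X) = (X - 1)(X - v)\<cdots>(X - v^(b-1))\<close>. The product \<open>\<Prod>\<^sub>i P\<^sub>\<mu>\<^sub>i(v^\<lambda>\<^sub>i)\<close> vanishes unless
  \<open>\<mu> \<le> \<lambda>\<close>, hence on the whole level set when \<open>\<sigma>(\<mu>) > t\<close>, and expanding it back only produces
  the monomials of exponents \<open>0 \<le> j' \<le> \<mu>\<close>. So the \<open>A(j',r)\<close> with \<open>j' \<ge> 0\<close> and
  \<open>\<sigma>(j') + \<sigma>(A) \<le> r\<close> span.

  The same vanishing makes the Newton series \<open>\<Sum>\<^sub>\<lambda> \<Prod>\<^sub>i P\<^sub>\<mu>\<^sub>i(v^\<lambda>\<^sub>i) [A + diag \<lambda>]\<close> triangular,
  hence independent. On a finite index set closed under decreasing \<open>j\<close> they lie in the span of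
  equally many \<open>A(j,r)\<close>, which are therefore independent as well.\<close>

definition scale_fun :: "'b::field \<Rightarrow> ('a \<Rightarrow> 'b) \<Rightarrow> 'a \<Rightarrow> 'b" where
  "scale_fun c f = (\<lambda>x. c * f x)"

lemma scale_fun_apply [simp]: "scale_fun c f x = c * f x"
  by (simp add: scale_fun_def)

interpretation fun_vs: vector_space "scale_fun :: 'b::field \<Rightarrow> ('a \<Rightarrow> 'b) \<Rightarrow> 'a \<Rightarrow> 'b"
  by unfold_locales (auto simp: fun_eq_iff algebra_simps)

lemma fscale_eq_scale_fun: "fscale = scale_fun"
  by (simp add: fscale_def scale_fun_def fun_eq_iff)

lemma sum_fun_apply: "(\<Sum>a\<in>A. f a) x = (\<Sum>a\<in>A. f a x)"
  by (induct A rule: infinite_finite_induct) auto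

lemma module_hom_scale_funI:
  fixes f :: "('a \<Rightarrow> 'k::field) \<Rightarrow> 'b \<Rightarrow> 'k"
  assumes "\<And>F G. f (F + G) = f F + f G" and "\<And>c F. f (scale_fun c F) = scale_fun c (f F)"
  shows "module_hom scale_fun scale_fun f"
  using assms by (simp add: module_hom_iff fun_vs.module_axioms)

lemma module_hom_mult_right: "module_hom scale_fun scale_fun (\<lambda>F. F * (w :: 'a \<Rightarrow> 'k::field))"
  by (rule module_hom_scale_funI) (simp_all add: fun_eq_iff algebra_simps)

lemma module_hom_in_span:
  assumes "module_hom scale_fun scale_fun f" and "x \<in> fun_vs.span S"
    and "f ` S \<subseteq> fun_vs.span T"
  shows "f x \<in> fun_vs.span T"
proof -
  have "f x \<in> fun_vs.span (f ` S)"
    using module_hom.span_image[OF assms(1)] assms(2) by blast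
  then show ?thesis
    using assms(3) fun_vs.span_minimal fun_vs.subspace_span by blast
qed

definition supp :: "(int \<Rightarrow> 'a::zero) \<Rightarrow> int set" where
  "supp f = {i. f i \<noteq> 0}"

lemma sigma_seq_eq_sum: "finite U \<Longrightarrow> supp f \<subseteq> U \<Longrightarrow> sigma_seq f = sum f U"
  unfolding sigma_seq_def supp_def by (rule sum.mono_neutral_left) auto

lemma sigma_seq_mono:
  fixes f g :: "int \<Rightarrow> 'a::ordered_comm_monoid_add"
  assumes "finite (supp f)" "finite (supp g)" "\<And>i. f i \<le> g i"
  shows "sigma_seq f \<le> sigma_seq g"
  using assms sigma_seq_eq_sum[of "supp f \<union> supp g" f] sigma_seq_eq_sum[of "supp f \<union> supp g" g]
  by (simp add: sum_mono)

lemma sigma_seq_strict_mono: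
  fixes f g :: "int \<Rightarrow> 'a::ordered_cancel_comm_monoid_add"
  assumes "finite (supp f)" "finite (supp g)" "\<And>i. f i \<le> g i" "f \<noteq> g"
  shows "sigma_seq f < sigma_seq g"
proof -
  let ?U = "supp f \<union> supp g"
  obtain i where "f i \<noteq> g i" using assms(4) by auto
  then have "f i < g i" "i \<in> ?U" using assms(3)[of i] by (auto simp: supp_def)
  then have "sum f ?U < sum g ?U"
    using assms by (intro sum_strict_mono_ex1) auto
  then show ?thesis using assms sigma_seq_eq_sum[of ?U f] sigma_seq_eq_sum[of ?U g] by simp
qed

lemma sigma_seq_nonneg: "(\<And>i. 0 \<le> f i) \<Longrightarrow> 0 \<le> sigma_seq (f :: int \<Rightarrow> 'a::ordered_comm_monoid_add)"
  by (simp add: sigma_seq_def sum_nonneg)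

lemma sigma_seq_of_nat: "sigma_seq (\<lambda>i. int (l i)) = int (sigma_seq l)"
  by (simp add: sigma_seq_def)

lemma le_sigma_seq: "l \<in> N_inf \<Longrightarrow> l i \<le> sigma_seq l"
  unfolding N_inf_def fin_supp_seq_def sigma_seq_def
  by (cases "l i = 0") (auto intro: member_le_sum)

lemma finite_supp_N_inf: "l \<in> N_inf \<longleftrightarrow> finite (supp l)"
  by (simp add: N_inf_def fin_supp_seq_def supp_def)

lemma finite_supp_Z_inf: "j \<in> Z_inf \<longleftrightarrow> finite (supp j)"
  by (simp add: Z_inf_def fin_supp_seq_def supp_def)

lemma exists_level_extension:
  fixes \<mu> :: "int \<Rightarrow> int"
  assumes "finite U" "supp \<mu> \<subseteq> U" "\<And>i. 0 \<le> \<mu> i" "sigma_seq \<mu> \<le> int t"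
  obtains l where "l \<in> N_inf" "sigma_seq l = t" "\<And>i. i \<in> U \<Longrightarrow> int (l i) = \<mu> i"
proof -
  obtain k where k: "k \<notin> U" using ex_new_if_finite[OF infinite_UNIV_int assms(1)] by blast
  then have "\<mu> k = 0" using assms(2) by (auto simp: supp_def)
  define l where "l i = nat (\<mu> i + (if i = k then int t - sigma_seq \<mu> else 0))" for i
  have l: "int (l i) = \<mu> i + (if i = k then int t - sigma_seq \<mu> else 0)" for i
    using assms(3,4) by (simp add: l_def)
  have supp_l: "supp l \<subseteq> insert k U"
  proof
    fix i assume "i \<in> supp l"
    then have "i = k \<or> \<mu> i \<noteq> 0" by (auto simp: supp_def l_def)
    then show "i \<in> insert k U" using assms(2) by (auto simp: supp_def)
  qed
  have "int (sigma_seq l) = (\<Sum>i\<in>insert k U. int (l i))"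
    using assms(1) by (simp add: sigma_seq_eq_sum[OF _ supp_l])
  also have "\<dots> = int t - sigma_seq \<mu> + sum \<mu> U"
    using assms(1) k \<open>\<mu> k = 0\<close> by (simp add: l sum.distrib)
  also have "sum \<mu> U = sigma_seq \<mu>"
    using assms(1) by (simp add: sigma_seq_eq_sum[OF _ assms(2)])
  finally have "sigma_seq l = t" by simp
  moreover have "l \<in> N_inf"
    using supp_l assms(1) finite_subset by (auto simp: finite_supp_N_inf)
  moreover have "int (l i) = \<mu> i" if "i \<in> U" for i
    using that k l by auto
  ultimately show thesis using that by blast
qed

section \<open>Newton interpolation\<close>

definition newton_poly :: "(nat \<Rightarrow> 'a::field) \<Rightarrow> nat \<Rightarrow> 'a poly" where
  "newton_poly x b = (\<Prod>c<b. [:- x c, 1:])"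

lemma poly_newton_poly: "poly (newton_poly x b) y = (\<Prod>c<b. y - x c)"
  by (simp add: newton_poly_def poly_prod)

lemma degree_newton_poly [simp]: "degree (newton_poly x b) = b"
  unfolding newton_poly_def by (subst degree_prod_eq_sum_degree) auto

lemma newton_poly_0 [simp]: "newton_poly x 0 = 1"
  by (simp add: newton_poly_def)

lemma poly_newton_poly_eq_0_iff: "inj x \<Longrightarrow> poly (newton_poly x b) (x a) = 0 \<longleftrightarrow> a < b"
  by (auto simp: poly_newton_poly inj_eq)

lemma newton_interpolation:
  assumes "inj x"
  shows "\<exists>d. \<forall>a\<le>t. h a = (\<Sum>b\<le>t. d b * poly (newton_poly x b) (x a))"
proof (induct t)
  case 0
  show ?case by (rule exI[of _ "\<lambda>_. h 0"]) simp
next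
  case (Suc t)
  then obtain d where d: "\<forall>a\<le>t. h a = (\<Sum>b\<le>t. d b * poly (newton_poly x b) (x a))"
    by blast
  let ?p = "\<lambda>a. poly (newton_poly x (Suc t)) (x a)"
  define e where "e = (h (Suc t) - (\<Sum>b\<le>t. d b * poly (newton_poly x b) (x (Suc t)))) / ?p (Suc t)"
  have "?p (Suc t) \<noteq> 0" and vanish: "\<And>a. a \<le> t \<Longrightarrow> ?p a = 0"
    using poly_newton_poly_eq_0_iff[OF assms] by auto
  have "h a = (\<Sum>b\<le>Suc t. (d(Suc t := e)) b * poly (newton_poly x b) (x a))"
    if "a \<le> Suc t" for a
  proof -
    have "(\<Sum>b\<le>Suc t. (d(Suc t := e)) b * poly (newton_poly x b) (x a))
        = (\<Sum>b\<le>t. d b * poly (newton_poly x b) (x a)) + e * ?p a"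
      by (simp add: sum.atMost_Suc)
    then show ?thesis
      using that d vanish \<open>?p (Suc t) \<noteq> 0\<close> by (cases "a = Suc t") (auto simp: e_def)
  qed
  then show ?case by blast
qed

lemma power_vv: "vv ^ n = Fract ([:0, 1:] ^ n) 1"
  by (induct n) (auto simp: vv_def One_fract_def)

lemma inj_power_vv: "inj (power vv)"
proof
  fix a b assume "vv ^ a = vv ^ b"
  then have "[:0, 1:] ^ a = ([:0, 1:] ^ b :: rat poly)"
    by (simp add: power_vv eq_fract)
  then have "degree ([:0, 1:] ^ a :: rat poly) = degree ([:0, 1:] ^ b :: rat poly)"
    by simp
  then show "a = b" by (simp add: degree_linear_power)
qed

lemma vv_nonzero: "vv \<noteq> 0"
proof
  assume "vv = 0"
  then have "vv ^ 1 = vv ^ 2" by simp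
  then show False using injD[OF inj_power_vv] by fastforce
qed

section \<open>Monomials and Newton products\<close>

definition vmono :: "(int \<Rightarrow> int) \<Rightarrow> (int \<Rightarrow> nat) \<Rightarrow> Qv" where
  "vmono j l = (\<Prod>i\<in>supp j. (vv powi j i) ^ l i)"

definition newton_prod :: "int set \<Rightarrow> (int \<Rightarrow> int) \<Rightarrow> (int \<Rightarrow> nat) \<Rightarrow> Qv" where
  "newton_prod S \<mu> l = (\<Prod>i\<in>S. poly (newton_poly (power vv) (nat (\<mu> i))) (vv ^ l i))"

definition int_box :: "int set \<Rightarrow> (int \<Rightarrow> int) \<Rightarrow> (int \<Rightarrow> int) set" where
  "int_box S \<mu> = {j. \<forall>i. (i \<in> S \<longrightarrow> 0 \<le> j i \<and> j i \<le> \<mu> i) \<and> (i \<notin> S \<longrightarrow> j i = 0)}"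

text \<open>Newton interpolation in one coordinate is exact only for \<open>\<lambda>\<^sub>i \<le> t\<close>, which holds on the support of
  every diagonal series at level \<open>t\<close>; multiplying by this indicator records that restriction.\<close>

definition box_indicator :: "nat \<Rightarrow> (int \<Rightarrow> nat) \<Rightarrow> Qv" where
  "box_indicator t l = of_bool (\<forall>i. l i \<le> t)"

lemma supp_subset_if_int_box: "j \<in> int_box S \<mu> \<Longrightarrow> supp j \<subseteq> S"
  by (auto simp: int_box_def supp_def)

lemma vmono_zero: "vmono (\<lambda>_. 0) = 1"
  by (simp add: vmono_def supp_def fun_eq_iff)

lemma vmono_upd:
  assumes "finite (supp j)" "j i = 0"
  shows "vmono (j(i := x)) l = vmono j l * (vv powi x) ^ l i"
proof (cases "x = 0")
  case False
  then have "supp (j(i := x)) = insert i (supp j)" and "i \<notin> supp j"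
    using assms(2) by (auto simp: supp_def)
  moreover have "(\<Prod>k\<in>supp j. (vv powi (j(i := x)) k) ^ l k) = vmono j l"
    unfolding vmono_def using \<open>i \<notin> supp j\<close> by (intro prod.cong) auto
  ultimately show ?thesis using assms(1) by (simp add: vmono_def mult.commute)
qed (use assms(2) in \<open>simp add: fun_upd_idem\<close>)

lemma newton_prod_empty [simp]: "newton_prod {} \<mu> = 1"
  by (simp add: newton_prod_def fun_eq_iff)

lemma newton_prod_insert:
  "finite S \<Longrightarrow> i \<notin> S \<Longrightarrow>
    newton_prod (insert i S) \<mu> l = poly (newton_poly (power vv) (nat (\<mu> i))) (vv ^ l i) * newton_prod S \<mu> l"
  by (simp add: newton_prod_def)

lemma newton_prod_upd: "i \<notin> S \<Longrightarrow> newton_prod S (\<mu>(i := b)) = newton_prod S \<mu>"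
  unfolding newton_prod_def by (intro ext prod.cong) auto

lemma newton_prod_eq_0_iff:
  "finite S \<Longrightarrow> newton_prod S \<mu> l = 0 \<longleftrightarrow> (\<exists>i\<in>S. l i < nat (\<mu> i))"
  by (simp add: newton_prod_def poly_newton_poly_eq_0_iff[OF inj_power_vv])

lemma newton_prod_supp:
  assumes "finite S" "supp \<mu> \<subseteq> S"
  shows "newton_prod S \<mu> = newton_prod (supp \<mu>) \<mu>"
  unfolding newton_prod_def using assms by (intro ext prod.mono_neutral_right) (auto simp: supp_def)

lemma newton_prod_supp_eq_0_iff:
  assumes "finite (supp \<mu>)"
  shows "newton_prod (supp \<mu>) \<mu> l = 0 \<longleftrightarrow> (\<exists>i. int (l i) < \<mu> i)"
proof -
  have "i \<in> supp \<mu>" if "int (l i) < \<mu> i" for i using that by (auto simp: supp_def)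
  then show ?thesis using assms by (auto simp: newton_prod_eq_0_iff zless_nat_eq_int_zless)
qed

lemma finite_int_box:
  assumes "finite S"
  shows "finite (int_box S \<mu>)"
proof (rule finite_subset)
  show "int_box S \<mu> \<subseteq> {j. \<forall>i. (i \<in> S \<longrightarrow> j i \<in> (\<Union>k\<in>S. {0..\<mu> k})) \<and> (i \<notin> S \<longrightarrow> j i = 0)}"
    by (auto simp: int_box_def)
  show "finite \<dots>"
    using assms by (intro finite_set_of_finite_funs) auto
qed

lemma self_mem_int_box: "(\<And>i. 0 \<le> j i) \<Longrightarrow> j \<in> int_box (supp j) j"
  by (auto simp: int_box_def supp_def)

lemma int_box_trans: "\<mu> \<in> int_box (supp j) j \<Longrightarrow> k \<in> int_box (supp \<mu>) \<mu> \<Longrightarrow> k \<in> int_box (supp j) j"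
  unfolding int_box_def supp_def by (smt (verit) mem_Collect_eq)

lemma newton_prod_in_span_vmono:
  assumes "finite S" "\<And>i. i \<in> S \<Longrightarrow> 0 \<le> \<mu> i"
  shows "newton_prod S \<mu> \<in> fun_vs.span {vmono j | j. j \<in> int_box S \<mu>}"
  using assms
proof (induct S)
  case empty
  have "(\<lambda>_. 0) \<in> int_box {} \<mu>" and "newton_prod {} \<mu> = vmono (\<lambda>_. 0)"
    by (simp_all add: int_box_def vmono_zero)
  then show ?case by (intro fun_vs.span_base) blast
next
  case (insert i S)
  define p where "p = newton_poly (power vv) (nat (\<mu> i))"
  define w where "w l = poly p (vv ^ l i)" for l :: "int \<Rightarrow> nat"
  have eq: "newton_prod (insert i S) \<mu> = newton_prod S \<mu> * w"
    using insert(1,2) by (simp add: fun_eq_iff newton_prod_insert w_def p_def mult.commute)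
  have IH: "newton_prod S \<mu> \<in> fun_vs.span {vmono j | j. j \<in> int_box S \<mu>}"
    by (rule insert.hyps(3)) (use insert.prems in blast)
  have gen: "vmono j * w \<in> fun_vs.span {vmono j | j. j \<in> int_box (insert i S) \<mu>}"
    if j: "j \<in> int_box S \<mu>" for j
  proof -
    have "j i = 0" "finite (supp j)"
      using j insert(1,2) finite_subset[OF supp_subset_if_int_box] by (auto simp: int_box_def)
    then have "vmono j * w = (\<Sum>a\<le>degree p. scale_fun (coeff p a) (vmono (j(i := int a))))"
      by (simp add: fun_eq_iff sum_fun_apply w_def vmono_upd poly_altdef sum_distrib_left
          power_mult[symmetric] mult.commute mult.left_commute)
    also have "\<dots> \<in> fun_vs.span {vmono j | j. j \<in> int_box (insert i S) \<mu>}"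
    proof (intro fun_vs.span_sum fun_vs.span_scale fun_vs.span_base)
      fix a assume "a \<in> {..degree p}"
      then have "j(i := int a) \<in> int_box (insert i S) \<mu>"
        using j insert.prems[of i] by (auto simp: int_box_def p_def le_nat_iff)
      then show "vmono (j(i := int a)) \<in> {vmono j | j. j \<in> int_box (insert i S) \<mu>}"
        by blast
    qed
    finally show ?thesis .
  qed
  show ?case
    unfolding eq by (rule module_hom_in_span[OF module_hom_mult_right IH]) (use gen in blast)
qed

lemma vmono_in_span_newton_prod:
  assumes "finite S" "supp j \<subseteq> S"
  shows "vmono j * box_indicator t
    \<in> fun_vs.span {newton_prod S \<mu> * box_indicator t | \<mu>. \<mu> \<in> int_box S (\<lambda>_. int t)}"
  using assms
proof (induct S arbitrary: j)
  case empty
  then have "j = (\<lambda>_. 0)" by (auto simp: supp_def)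
  then have "vmono j * box_indicator t = newton_prod {} (\<lambda>_. 0) * box_indicator t"
    by (simp add: vmono_zero)
  moreover have "(\<lambda>_. 0) \<in> int_box {} (\<lambda>_. int t)"
    by (simp add: int_box_def)
  ultimately show ?case by (intro fun_vs.span_base) blast
next
  case (insert i S j)
  define w where "w l = (vv powi j i) ^ l i" for l :: "int \<Rightarrow> nat"
  have "supp (j(i := 0)) \<subseteq> S" using insert(4) by (auto simp: supp_def)
  then have "vmono j = vmono (j(i := 0)) * w"
    using vmono_upd[of "j(i := 0)" i "j i"] insert(1) finite_subset
    by (auto simp: fun_eq_iff w_def)
  then have eq: "vmono j * box_indicator t = vmono (j(i := 0)) * box_indicator t * w"
    by (simp add: ac_simps)
  have IH: "vmono (j(i := 0)) * box_indicator t
      \<in> fun_vs.span {newton_prod S \<mu> * box_indicator t | \<mu>. \<mu> \<in> int_box S (\<lambda>_. int t)}"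
    using insert(3) \<open>supp (j(i := 0)) \<subseteq> S\<close> by blast
  obtain d where d: "\<And>a. a \<le> t \<Longrightarrow> (vv powi j i) ^ a
      = (\<Sum>b\<le>t. d b * poly (newton_poly (power vv) b) (vv ^ a))"
    using newton_interpolation[OF inj_power_vv] by blast
  have gen: "newton_prod S \<mu> * box_indicator t * w
      \<in> fun_vs.span {newton_prod (insert i S) \<mu> * box_indicator t | \<mu>. \<mu> \<in> int_box (insert i S) (\<lambda>_. int t)}"
    if \<mu>: "\<mu> \<in> int_box S (\<lambda>_. int t)" for \<mu>
  proof -
    have "newton_prod S \<mu> * box_indicator t * w
        = (\<Sum>b\<le>t. scale_fun (d b) (newton_prod (insert i S) (\<mu>(i := int b)) * box_indicator t))"
    proof (rule ext)
      fix l
      show "(newton_prod S \<mu> * box_indicator t * w) l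
        = (\<Sum>b\<le>t. scale_fun (d b) (newton_prod (insert i S) (\<mu>(i := int b)) * box_indicator t)) l"
      proof (cases "\<forall>k. l k \<le> t")
        case True
        then have "w l = (\<Sum>b\<le>t. d b * poly (newton_poly (power vv) b) (vv ^ l i))"
          using d by (simp add: w_def)
        then show ?thesis
          using True insert(1,2) by (simp add: box_indicator_def sum_fun_apply newton_prod_insert
              newton_prod_upd sum_distrib_left sum_distrib_right ac_simps)
      qed (auto simp: box_indicator_def sum_fun_apply)
    qed
    also have "\<dots> \<in> fun_vs.span {newton_prod (insert i S) \<mu> * box_indicator t | \<mu>. \<mu> \<in> int_box (insert i S) (\<lambda>_. int t)}"
      using \<mu> by (intro fun_vs.span_sum fun_vs.span_scale fun_vs.span_base) (auto simp: int_box_def)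
    finally show ?thesis .
  qed
  show ?case
    unfolding eq by (rule module_hom_in_span[OF module_hom_mult_right IH]) (use gen in blast)
qed

section \<open>Formal sums along the diagonal\<close>

definition diag_series :: "nat \<Rightarrow> zmat \<Rightarrow> ((int \<Rightarrow> nat) \<Rightarrow> Qv) \<Rightarrow> formal_sum" where
  "diag_series r A F = (\<lambda>M. \<Sum>l\<in>{l. l \<in> N_inf \<and> sigma_mat A + sigma_seq l = r
      \<and> M = (\<lambda>i k. A i k + diagm l i k)}. F l)"

lemma module_hom_diag_series: "module_hom scale_fun scale_fun (diag_series r A)"
  by (rule module_hom_scale_funI)
    (simp_all add: diag_series_def fun_eq_iff sum.distrib sum_distrib_left)

lemma diag_series_zero [simp]: "diag_series r A 0 = 0"
  by (simp add: diag_series_def fun_eq_iff)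

lemma diag_series_cong:
  "(\<And>l. l \<in> N_inf \<Longrightarrow> sigma_mat A + sigma_seq l = r \<Longrightarrow> F l = G l) \<Longrightarrow>
    diag_series r A F = diag_series r A G"
  unfolding diag_series_def by (intro ext sum.cong) auto

lemma diag_series_mult_box_indicator:
  "diag_series r A (F * box_indicator (r - sigma_mat A)) = diag_series r A F"
proof (rule diag_series_cong)
  fix l assume "l \<in> N_inf" "sigma_mat A + sigma_seq l = r"
  then have "\<forall>i. l i \<le> r - sigma_mat A" using le_sigma_seq by fastforce
  then show "(F * box_indicator (r - sigma_mat A)) l = F l" by (simp add: box_indicator_def)
qed

lemma vmono_eq_powi:
  assumes "finite (supp j)" "l \<in> N_inf"
  shows "vmono j l = vv powi (\<Sum>i\<in>{i. l i \<noteq> 0}. int (l i) * j i)"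
proof -
  let ?U = "supp l \<union> supp j"
  have U: "finite ?U" using assms by (simp add: finite_supp_N_inf)
  have "vmono j l = (\<Prod>i\<in>?U. (vv powi j i) ^ l i)"
    unfolding vmono_def using U by (intro prod.mono_neutral_left) (auto simp: supp_def)
  also have "\<dots> = (\<Prod>i\<in>?U. vv powi (int (l i) * j i))"
    by (simp add: power_int_power' mult.commute)
  also have "\<dots> = vv powi (\<Sum>i\<in>?U. int (l i) * j i)"
    using U by (induct rule: finite_induct) (simp_all add: power_int_add vv_nonzero)
  also have "(\<Sum>i\<in>?U. int (l i) * j i) = (\<Sum>i\<in>{i. l i \<noteq> 0}. int (l i) * j i)"
    using U by (intro sum.mono_neutral_right) (auto simp: supp_def)
  finally show ?thesis .
qed

lemma Ajr_eq_diag_series_vmono: "finite (supp j) \<Longrightarrow> Ajr A j r = diag_series r A (vmono j)"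
  unfolding Ajr_def diag_series_def by (intro ext sum.cong) (auto simp: vmono_eq_powi)

lemma diag_series_eval:
  assumes "A \<in> Xi_pm" "A0 \<in> Xi_pm" "l0 \<in> N_inf" "sigma_mat A0 + sigma_seq l0 = r"
  shows "diag_series r A F (\<lambda>i k. A0 i k + diagm l0 i k) = (if A = A0 then F l0 else 0)"
proof -
  have diag: "A i i = 0" "A0 i i = 0" for i using assms(1,2) by (auto simp: Xi_pm_def)
  have "A = A0 \<and> l = l0" if "(\<lambda>i k. A0 i k + diagm l0 i k) = (\<lambda>i k. A i k + diagm l i k)" for l
  proof -
    from that have e: "A0 i k + diagm l0 i k = A i k + diagm l i k" for i k
      by (simp add: fun_eq_iff)
    have "A i k = A0 i k" for i k
      using e[of i k] diag[of i] by (cases "i = k") (auto simp: diagm_def)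
    moreover have "l i = l0 i" for i using e[of i i] diag[of i] by (simp add: diagm_def)
    ultimately show ?thesis by (simp add: fun_eq_iff)
  qed
  then have "{l. l \<in> N_inf \<and> sigma_mat A + sigma_seq l = r
      \<and> (\<lambda>i k. A0 i k + diagm l0 i k) = (\<lambda>i k. A i k + diagm l i k)} = (if A = A0 then {l0} else {})"
    using assms(3,4) by auto
  then show ?thesis by (simp add: diag_series_def)
qed

section \<open>The spanning set\<close>

definition admissible :: "nat \<Rightarrow> zmat \<Rightarrow> (int \<Rightarrow> int) \<Rightarrow> bool" where
  "admissible r A j \<longleftrightarrow> A \<in> Xi_pm \<and> finite (supp j) \<and> (\<forall>i. 0 \<le> j i)
    \<and> sigma_seq j + int (sigma_mat A) \<le> int r"

lemma admissible_if_int_box: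
  assumes "admissible r A \<mu>" "finite S" "j \<in> int_box S \<mu>"
  shows "admissible r A j"
proof -
  have fin: "finite (supp j)"
    using finite_subset[OF supp_subset_if_int_box[OF assms(3)] assms(2)] .
  have "0 \<le> \<mu> i" for i using assms(1) by (simp add: admissible_def)
  moreover have "(i \<in> S \<longrightarrow> 0 \<le> j i \<and> j i \<le> \<mu> i) \<and> (i \<notin> S \<longrightarrow> j i = 0)" for i
    using assms(3) by (simp add: int_box_def)
  ultimately have le: "j i \<le> \<mu> i" and nonneg: "0 \<le> j i" for i
    by (metis order_refl)+
  have "sigma_seq j \<le> sigma_seq \<mu>"
    using sigma_seq_mono[OF fin _ le] assms(1) by (simp add: admissible_def)
  then show ?thesis using assms(1) fin nonneg by (simp add: admissible_def)
qed

definition newton_series :: "nat \<Rightarrow> zmat \<times> (int \<Rightarrow> int) \<Rightarrow> formal_sum" where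
  "newton_series r = (\<lambda>(A, \<mu>). diag_series r A (newton_prod (supp \<mu>) \<mu>))"

lemma newton_series_in_span_Ajr:
  assumes "finite (supp \<mu>)" "\<forall>i. 0 \<le> \<mu> i"
    and "\<And>j. j \<in> int_box (supp \<mu>) \<mu> \<Longrightarrow> Ajr A j r \<in> G"
  shows "newton_series r (A, \<mu>) \<in> fun_vs.span G"
proof -
  have "diag_series r A (vmono j) \<in> G" if "j \<in> int_box (supp \<mu>) \<mu>" for j
    using assms(1,3) that finite_subset[OF supp_subset_if_int_box[OF that]]
    by (simp add: Ajr_eq_diag_series_vmono[symmetric])
  then show ?thesis
    unfolding newton_series_def using assms(1,2)
    by (auto intro: module_hom_in_span[OF module_hom_diag_series newton_prod_in_span_vmono]
        fun_vs.span_base)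
qed

lemma newton_series_in_span_admissible:
  assumes "A \<in> Xi_pm" "finite (supp \<mu>)" "\<forall>i. 0 \<le> \<mu> i"
  shows "newton_series r (A, \<mu>) \<in> fun_vs.span {Ajr A j r | A j. admissible r A j}"
proof (cases "sigma_seq \<mu> + int (sigma_mat A) \<le> int r")
  case True
  then have "admissible r A \<mu>" using assms by (simp add: admissible_def)
  then have "admissible r A j" if "j \<in> int_box (supp \<mu>) \<mu>" for j
    using admissible_if_int_box assms(2) that by blast
  then show ?thesis using assms(2,3) by (intro newton_series_in_span_Ajr) blast+
next
  case False
  have "newton_prod (supp \<mu>) \<mu> l = 0" if "l \<in> N_inf" "sigma_mat A + sigma_seq l = r" for l
  proof (rule ccontr)
    assume "newton_prod (supp \<mu>) \<mu> l \<noteq> 0"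
    then have "\<not> (\<exists>i. int (l i) < \<mu> i)"
      using newton_prod_supp_eq_0_iff[OF assms(2)] by simp
    then have "\<mu> i \<le> int (l i)" for i by (simp add: not_less)
    then have "sigma_seq \<mu> \<le> int (sigma_seq l)"
      using assms(2) that(1) unfolding sigma_seq_of_nat[symmetric]
      by (intro sigma_seq_mono) (auto simp: finite_supp_N_inf supp_def)
    then show False using False that(2) by linarith
  qed
  then have "newton_series r (A, \<mu>) = 0"
    using diag_series_cong[of A r _ 0] by (simp add: newton_series_def)
  then show ?thesis by (simp add: fun_vs.span_zero)
qed

lemma Ajr_in_span_admissible:
  assumes "A \<in> Xi_pm" "j \<in> Z_inf"
  shows "Ajr A j r \<in> fun_vs.span {Ajr A j r | A j. admissible r A j}"
proof -
  define t where "t = r - sigma_mat A"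
  have S: "finite (supp j)" using assms(2) by (simp add: finite_supp_Z_inf)
  have "Ajr A j r = diag_series r A (vmono j * box_indicator t)"
    using S by (simp add: Ajr_eq_diag_series_vmono t_def diag_series_mult_box_indicator)
  moreover have "diag_series r A (newton_prod (supp j) \<mu> * box_indicator t)
      \<in> fun_vs.span {Ajr A j r | A j. admissible r A j}"
    if \<mu>: "\<mu> \<in> int_box (supp j) (\<lambda>_. int t)" for \<mu>
  proof -
    have "0 \<le> \<mu> i" for i
      using \<mu> unfolding int_box_def by (cases "i \<in> supp j") auto
    moreover have "diag_series r A (newton_prod (supp j) \<mu> * box_indicator t) = newton_series r (A, \<mu>)"
      using S supp_subset_if_int_box[OF \<mu>]
      by (simp add: t_def diag_series_mult_box_indicator newton_series_def newton_prod_supp)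
    ultimately show ?thesis
      using S assms(1) finite_subset[OF supp_subset_if_int_box[OF \<mu>]]
      by (simp add: newton_series_in_span_admissible)
  qed
  ultimately show ?thesis
    using S by (auto intro: module_hom_in_span[OF module_hom_diag_series vmono_in_span_newton_prod])
qed

section \<open>Linear independence\<close>

lemma newton_series_eval_ne_0_iff:
  assumes "admissible r A \<mu>" "admissible r A0 \<mu>0" "supp \<mu> \<subseteq> U" "supp \<mu>0 \<subseteq> U"
    and "l0 \<in> N_inf" "sigma_mat A0 + sigma_seq l0 = r" "\<And>i. i \<in> U \<Longrightarrow> int (l0 i) = \<mu>0 i"
  shows "newton_series r (A, \<mu>) (\<lambda>i k. A0 i k + diagm l0 i k) \<noteq> 0
    \<longleftrightarrow> A = A0 \<and> (\<forall>i. \<mu> i \<le> \<mu>0 i)"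
proof -
  have "\<mu> i \<le> int (l0 i) \<longleftrightarrow> \<mu> i \<le> \<mu>0 i" for i
  proof (cases "i \<in> U")
    case False
    then have "\<mu> i = 0" "\<mu>0 i = 0" using assms(3,4) by (auto simp: supp_def)
    then show ?thesis by simp
  qed (simp add: assms(7))
  moreover have "newton_series r (A, \<mu>) (\<lambda>i k. A0 i k + diagm l0 i k)
      = (if A = A0 then newton_prod (supp \<mu>) \<mu> l0 else 0)"
    using diag_series_eval[of A A0 l0 r] assms(1,2,5,6)
    by (simp add: newton_series_def admissible_def)
  ultimately show ?thesis
    using newton_prod_supp_eq_0_iff[of \<mu> l0] assms(1) by (auto simp: admissible_def not_less)
qed

lemma newton_series_coefficients_eq_0:
  assumes "finite D" "\<And>A \<mu>. (A, \<mu>) \<in> D \<Longrightarrow> admissible r A \<mu>"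
    and "(\<Sum>d\<in>D. scale_fun (c d) (newton_series r d)) = 0"
  shows "\<forall>d\<in>D. c d = 0"
proof (rule ccontr)
  let ?N = "{d \<in> D. c d \<noteq> 0}"
  assume "\<not> (\<forall>d\<in>D. c d = 0)"
  then have "finite ?N" "?N \<noteq> {}" using assms(1) by auto
  from arg_min_if_finite[OF this, of "\<lambda>d. sigma_seq (snd d)"]
  obtain A0 \<mu>0 where d0: "(A0, \<mu>0) \<in> D" "c (A0, \<mu>0) \<noteq> 0"
    and min: "\<And>d. d \<in> D \<Longrightarrow> c d \<noteq> 0 \<Longrightarrow> \<not> sigma_seq (snd d) < sigma_seq \<mu>0"
    by (metis (mono_tags, lifting) mem_Collect_eq prod.collapse snd_conv)
  have adm0: "admissible r A0 \<mu>0" using assms(2) d0(1) .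
  let ?U = "\<Union>d\<in>D. supp (snd d)"
  have U: "finite ?U"
  proof (rule finite_UN_I[OF assms(1)])
    fix d assume "d \<in> D"
    then show "finite (supp (snd d))" using assms(2) by (cases d) (simp add: admissible_def)
  qed
  have supp_U: "supp \<mu> \<subseteq> ?U" if "(A, \<mu>) \<in> D" for A \<mu> using that by force
  moreover have "\<And>i. 0 \<le> \<mu>0 i" and "sigma_seq \<mu>0 \<le> int (r - sigma_mat A0)"
    using adm0 by (auto simp: admissible_def)
  ultimately obtain l0 where l0: "l0 \<in> N_inf" "sigma_seq l0 = r - sigma_mat A0"
      "\<And>i. i \<in> ?U \<Longrightarrow> int (l0 i) = \<mu>0 i"
    using exists_level_extension[OF U] d0(1) by blast
  have "sigma_mat A0 \<le> r"
    using adm0 sigma_seq_nonneg[of \<mu>0] by (auto simp: admissible_def)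
  with l0(2) have "sigma_mat A0 + sigma_seq l0 = r" by simp
  note eval = newton_series_eval_ne_0_iff[OF assms(2) adm0 supp_U supp_U[OF d0(1)] l0(1) this l0(3)]
  \<comment> \<open>\<open>l0\<close> extends \<open>\<mu>0\<close> by a fresh coordinate up to level \<open>r - \<sigma>(A0)\<close>; at \<open>A0 + diag l0\<close>
    only the term of the minimal \<open>(A0, \<mu>0)\<close> survives.\<close>
  define M0 where "M0 = (\<lambda>i k. A0 i k + diagm l0 i k)"
  have vanish: "newton_series r (A, \<mu>) M0 = 0" if "(A, \<mu>) \<in> D" "c (A, \<mu>) \<noteq> 0" "(A, \<mu>) \<noteq> (A0, \<mu>0)" for A \<mu>
  proof (rule ccontr)
    assume "newton_series r (A, \<mu>) M0 \<noteq> 0"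
    then have "A = A0" "\<And>i. \<mu> i \<le> \<mu>0 i" using eval[OF that(1) that(1)] by (auto simp: M0_def)
    then have "sigma_seq \<mu> < sigma_seq \<mu>0"
      using that(3) assms(2)[OF that(1)] adm0 by (intro sigma_seq_strict_mono) (auto simp: admissible_def)
    then show False using min[OF that(1,2)] by simp
  qed
  have "0 = (\<Sum>d\<in>D. scale_fun (c d) (newton_series r d)) M0"
    using assms(3) by simp
  also have "\<dots> = (\<Sum>d\<in>D. if d = (A0, \<mu>0) then c d * newton_series r d M0 else 0)"
    unfolding sum_fun_apply by (rule sum.cong[OF refl]) (use vanish in force)
  also have "\<dots> = c (A0, \<mu>0) * newton_series r (A0, \<mu>0) M0"
    using assms(1) d0(1) by simp
  finally show False
    using d0 eval[OF d0(1) d0(1)] by (simp add: M0_def)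
qed

lemma inj_on_newton_series:
  assumes "finite D" "\<And>A \<mu>. (A, \<mu>) \<in> D \<Longrightarrow> admissible r A \<mu>"
  shows "inj_on (newton_series r) D"
proof (rule inj_onI, rule ccontr)
  fix d1 d2 assume d: "d1 \<in> D" "d2 \<in> D" "newton_series r d1 = newton_series r d2" "d1 \<noteq> d2"
  define c where "c d = (if d = d1 then 1 else if d = d2 then -1 else 0 :: Qv)" for d
  have "(\<Sum>d\<in>D. scale_fun (c d) (newton_series r d)) = (\<Sum>d\<in>{d1, d2}. scale_fun (c d) (newton_series r d))"
    using assms(1) d by (intro sum.mono_neutral_right) (auto simp: c_def fun_eq_iff)
  also have "\<dots> = 0" using d by (simp add: c_def fun_eq_iff)
  finally have "\<forall>d\<in>D. c d = 0"
    using newton_series_coefficients_eq_0[of D r c] assms by blast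
  then have "c d1 = 0" using d(1) by blast
  then show False by (simp add: c_def)
qed

lemma independent_newton_series:
  assumes "finite D" "\<And>A \<mu>. (A, \<mu>) \<in> D \<Longrightarrow> admissible r A \<mu>"
  shows "fun_vs.independent (newton_series r ` D)"
  unfolding fun_vs.dependent_finite[OF finite_imageI[OF assms(1)]]
proof clarsimp
  fix u d assume u: "(\<Sum>v\<in>newton_series r ` D. scale_fun (u v) v) = 0" "d \<in> D" "u (newton_series r d) \<noteq> 0"
  have "(\<Sum>d\<in>D. scale_fun (u (newton_series r d)) (newton_series r d)) = 0"
    using u(1) by (simp add: sum.reindex[OF inj_on_newton_series[OF assms]])
  then have "\<forall>d\<in>D. u (newton_series r d) = 0"
    using newton_series_coefficients_eq_0[of D r "u \<circ> newton_series r"] assms by simp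
  then show False using u(2,3) by blast
qed

lemma independent_Ajr_if_down_closed:
  assumes "finite D" "\<And>A \<mu>. (A, \<mu>) \<in> D \<Longrightarrow> admissible r A \<mu>"
    and "\<And>A \<mu> j. (A, \<mu>) \<in> D \<Longrightarrow> j \<in> int_box (supp \<mu>) \<mu> \<Longrightarrow> (A, j) \<in> D"
  shows "fun_vs.independent ((\<lambda>(A, j). Ajr A j r) ` D)"
proof -
  let ?G = "(\<lambda>(A, j). Ajr A j r) ` D" and ?E = "newton_series r ` D"
  have "?E \<subseteq> fun_vs.span ?G"
  proof clarify
    fix A \<mu> assume "(A, \<mu>) \<in> D"
    then show "newton_series r (A, \<mu>) \<in> fun_vs.span ?G"
      using assms(2,3) by (intro newton_series_in_span_Ajr) (auto simp: admissible_def)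
  qed
  obtain B where B: "B \<subseteq> ?G" "fun_vs.independent B" "?G \<subseteq> fun_vs.span B"
      "card B = fun_vs.dim ?G"
    by (rule fun_vs.basis_exists)
  have "finite B" using finite_subset[OF B(1)] assms(1) by simp
  have "fun_vs.span ?G \<subseteq> fun_vs.span B"
    using fun_vs.span_minimal[OF B(3) fun_vs.subspace_span] .
  with \<open>?E \<subseteq> fun_vs.span ?G\<close> have "?E \<subseteq> fun_vs.span B" by (rule order_trans)
  then have "card ?E \<le> card B"
    using fun_vs.independent_span_bound[OF \<open>finite B\<close> independent_newton_series[OF assms(1,2)]]
    by simp
  moreover have "card ?G \<le> card ?E"
    using card_image_le[OF assms(1)] card_image[OF inj_on_newton_series[OF assms(1,2)]] by simp
  ultimately have "B = ?G"
    using B(1) assms(1) by (intro card_seteq) auto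
  with B(2) show ?thesis by simp
qed

lemma independent_Ajr_admissible: "fun_vs.independent {Ajr A j r | A j. admissible r A j}"
proof
  let ?Ajr = "\<lambda>(A, j). Ajr A j r"
  assume "fun_vs.dependent {Ajr A j r | A j. admissible r A j}"
  then obtain T u where T: "finite T" "T \<subseteq> {Ajr A j r | A j. admissible r A j}"
      "(\<Sum>v\<in>T. scale_fun (u v) v) = 0" "\<exists>v\<in>T. u v \<noteq> 0"
    unfolding fun_vs.dependent_explicit by blast
  then have "T \<subseteq> ?Ajr ` {(A, j). admissible r A j}" by auto
  from finite_subset_image[OF T(1) this] obtain P
    where P: "P \<subseteq> {(A, j). admissible r A j}" "finite P" "T = ?Ajr ` P"
    by blast
  define D where "D = (\<Union>(A, j)\<in>P. {A} \<times> int_box (supp j) j)"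
  have D: "\<exists>j. (A, j) \<in> P \<and> \<mu> \<in> int_box (supp j) j" if "(A, \<mu>) \<in> D" for A \<mu>
    using that by (auto simp: D_def)
  have "finite D"
    using P(1,2) by (auto simp: D_def admissible_def intro!: finite_int_box)
  moreover have "admissible r A \<mu>" if "(A, \<mu>) \<in> D" for A \<mu>
  proof -
    from D[OF that] obtain j where j: "(A, j) \<in> P" "\<mu> \<in> int_box (supp j) j" by blast
    then have "admissible r A j" using P(1) by blast
    moreover from this have "finite (supp j)" by (simp add: admissible_def)
    ultimately show ?thesis using j(2) by (rule admissible_if_int_box)
  qed
  moreover have "(A, k) \<in> D" if "(A, \<mu>) \<in> D" "k \<in> int_box (supp \<mu>) \<mu>" for A \<mu> k
  proof -
    from D[OF that(1)] obtain j where "(A, j) \<in> P" "\<mu> \<in> int_box (supp j) j" by blast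
    with that(2) show ?thesis by (auto simp: D_def intro: int_box_trans)
  qed
  ultimately have "fun_vs.independent (?Ajr ` D)"
    by (rule independent_Ajr_if_down_closed)
  moreover have "(A, j) \<in> D" if "(A, j) \<in> P" for A j
    using that P(1) self_mem_int_box[of j] by (auto simp: D_def admissible_def)
  then have "T \<subseteq> ?Ajr ` D"
    using P(3) by auto
  ultimately have "fun_vs.independent T"
    by (rule fun_vs.independent_mono)
  then show False using T unfolding fun_vs.dependent_explicit by blast
qed

theorem proposition6p8:
  fixes r :: nat
  defines "B \<equiv> {Ajr A j r | A j. A \<in> Xi_pm \<and> j \<in> Z_inf \<and> (\<forall>i. 0 \<le> j i)
                 \<and> sigma_seq j + int (sigma_mat A) \<le> int r}"
  shows "\<not> module.dependent fscale B \<and> module.span fscale B = Vr r"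
proof -
  have B: "B = {Ajr A j r | A j. admissible r A j}"
    unfolding B_def admissible_def finite_supp_Z_inf by blast
  have "fun_vs.span B = Vr r"
    unfolding Vr_def fscale_eq_scale_fun fun_vs.span_eq
  proof
    show "B \<subseteq> fun_vs.span {Ajr A j r | A j. A \<in> Xi_pm \<and> j \<in> Z_inf}"
      unfolding B_def by (auto intro: fun_vs.span_base)
    show "{Ajr A j r | A j. A \<in> Xi_pm \<and> j \<in> Z_inf} \<subseteq> fun_vs.span B"
      unfolding B by (auto intro: Ajr_in_span_admissible)
  qed
  then show ?thesis
    using independent_Ajr_admissible unfolding B fscale_eq_scale_fun by simp
qed

end
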